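(* Let $(T_t)_{t\ge0}$ be a semigroup of composition operators on $\mathcal{F}^2$ (i.e. $T_tf=f\circ\phi_t$ with $\phi_t$ entire), and suppose it has an analytic extension to the sector $\Sigma_\theta$ for some $0<\theta<\pi/2$. Then for every $\xi\in\Sigma_\theta$ the operator $T_\xi$ is a composition operator.
   Context: $\mathcal{F}^2$ is the Hilbert space of entire functions $f$ with $\|f\|_2^2=\frac{1}{\pi}\int_{\mathbb{C}}|f(z)|^2e^{-|z|^2}\,dm(z)<\infty$. For $0<\theta<\pi/2$, $\Sigma_\theta=\{re^{i\alpha}:r>0,|\alpha|<\theta\}$. An analytic extension of the semigroup to $\Sigma_\theta$ is an analytic map $\xi\mapsto T_\xi$ from $\Sigma_\theta$ to the bounded operators on $\mathcal{F}^2$, agreeing with the semigroup on $(0,\infty)$, satisfying $T_{\xi+\eta}=T_\xi T_\eta$, strongly continuous at $0$ (with $T_0=I$), and with $\sup_{\xi\in\Sigma_\theta,|\xi|<1}\|T_\xi\|<\infty$. *)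

theory Defs
  imports "HOL-Analysis.Analysis"
begin

text \<open>Operators on the Fock space are modelled as maps on functions
  \<open>complex \<Rightarrow> complex\<close>; only their behaviour on \<open>fock2\<close> matters.\<close>

type_synonym op = "(complex \<Rightarrow> complex) \<Rightarrow> (complex \<Rightarrow> complex)"

definition fock_weight :: "(complex \<Rightarrow> complex) \<Rightarrow> complex \<Rightarrow> real" where
  "fock_weight f z = (cmod (f z))\<^sup>2 * exp (- (cmod z)\<^sup>2)"

definition fock2 :: "(complex \<Rightarrow> complex) set" where
  "fock2 = {f. f holomorphic_on UNIV \<and> integrable lborel (fock_weight f)}"

definition fock_norm :: "(complex \<Rightarrow> complex) \<Rightarrow> real" where
  "fock_norm f = sqrt ((1 / pi) * integral\<^sup>L lborel (fock_weight f))"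

definition bdd_op :: "op \<Rightarrow> bool" where
  "bdd_op T \<longleftrightarrow>
     (\<forall>f\<in>fock2. T f \<in> fock2) \<and>
     (\<forall>f\<in>fock2. \<forall>g\<in>fock2. T (\<lambda>z. f z + g z) = (\<lambda>z. T f z + T g z)) \<and>
     (\<forall>f\<in>fock2. \<forall>c::complex. T (\<lambda>z. c * f z) = (\<lambda>z. c * T f z)) \<and>
     (\<exists>C. \<forall>f\<in>fock2. fock_norm (T f) \<le> C * fock_norm f)"

definition op_norm :: "op \<Rightarrow> real" where
  "op_norm T = Sup ((\<lambda>f. fock_norm (T f)) ` {f\<in>fock2. fock_norm f \<le> 1})"

definition is_comp_op :: "op \<Rightarrow> bool" where
  "is_comp_op T \<longleftrightarrow> (\<exists>\<phi>. \<phi> holomorphic_on UNIV \<and> (\<forall>f\<in>fock2. T f = f \<circ> \<phi>))"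

definition comp_semigroup :: "(real \<Rightarrow> op) \<Rightarrow> bool" where
  "comp_semigroup S \<longleftrightarrow>
     (\<forall>t\<ge>0. bdd_op (S t) \<and> is_comp_op (S t)) \<and>
     (\<forall>f\<in>fock2. S 0 f = f) \<and>
     (\<forall>s\<ge>0. \<forall>t\<ge>0. \<forall>f\<in>fock2. S (s + t) f = S s (S t f)) \<and>
     (\<forall>f\<in>fock2. ((\<lambda>t. fock_norm (\<lambda>z. S t f z - f z)) \<longlongrightarrow> 0) (at_right 0))"

definition sector :: "real \<Rightarrow> complex set" where
  "sector \<theta> = {z. z \<noteq> 0 \<and> \<bar>Arg z\<bar> < \<theta>}"

definition op_analytic_on :: "(complex \<Rightarrow> op) \<Rightarrow> complex set \<Rightarrow> bool" where
  "op_analytic_on T A \<longleftrightarrow>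
     (\<forall>\<xi>\<in>A. \<exists>D. bdd_op D \<and>
        ((\<lambda>h. op_norm (\<lambda>f z. T (\<xi> + h) f z - T \<xi> f z - h * D f z) / cmod h) \<longlongrightarrow> 0) (at 0))"

definition analytic_extension :: "(real \<Rightarrow> op) \<Rightarrow> real \<Rightarrow> (complex \<Rightarrow> op) \<Rightarrow> bool" where
  "analytic_extension S \<theta> T \<longleftrightarrow>
     (\<forall>\<xi>\<in>sector \<theta>. bdd_op (T \<xi>)) \<and>
     op_analytic_on T (sector \<theta>) \<and>
     (\<forall>t>0. \<forall>f\<in>fock2. T (complex_of_real t) f = S t f) \<and>
     (\<forall>\<xi>\<in>sector \<theta>. \<forall>\<eta>\<in>sector \<theta>. \<forall>f\<in>fock2. T (\<xi> + \<eta>) f = T \<xi> (T \<eta> f)) \<and>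
     (\<forall>f\<in>fock2. T 0 f = f) \<and>
     (\<forall>f\<in>fock2. ((\<lambda>\<xi>. fock_norm (\<lambda>z. T \<xi> f z - f z)) \<longlongrightarrow> 0) (at 0 within sector \<theta>)) \<and>
     (\<exists>M. \<forall>\<xi>\<in>sector \<theta>. cmod \<xi> < 1 \<longrightarrow> op_norm (T \<xi>) \<le> M)"

end

theory Submission
  imports Defs "HOL-Complex_Analysis.Complex_Analysis" "HOL-Probability.Distributions"
begin

(* Fix f \<in> F\<^sup>2 and a point z, and compare \<zeta> \<mapsto> (T\<^sub>\<zeta> f)(z) with \<zeta> \<mapsto> f((T\<^sub>\<zeta> id)(z)).
   Point evaluations are bounded on F\<^sup>2: Cauchy's formula on unit circles, averaged over
   their centres in a small square around z, bounds |g(z)| by the Gaussian-weighted L\<^sup>2 norm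
   of g. Hence analyticity of \<zeta> \<mapsto> T\<^sub>\<zeta> in operator norm makes both maps holomorphic
   on the sector. For t > 0 the operator T\<^sub>t = S\<^sub>t is a composition operator, whose symbol
   can only be S\<^sub>t id, so the two maps agree on the positive axis. The sector is open and
   connected, so the identity theorem gives T\<^sub>\<xi> f = f \<circ> T\<^sub>\<xi> id, and T\<^sub>\<xi> id lies in F\<^sup>2,
   hence is entire. *)

section \<open>The Fock space\<close>

lemma fock_weight_nonneg [simp]: "0 \<le> fock_weight f z"
  by (simp add: fock_weight_def)

lemma borel_measurable_fock_weight [measurable]:
  assumes "continuous_on UNIV f"
  shows "fock_weight f \<in> borel_measurable borel"
proof -
  have [measurable]: "f \<in> borel_measurable borel"
    using assms borel_measurable_continuous_onI by blast
  show ?thesis unfolding fock_weight_def by measurable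
qed

lemma fock2D:
  assumes "f \<in> fock2"
  shows "f holomorphic_on UNIV" "continuous_on UNIV f" "integrable lborel (fock_weight f)"
  using assms holomorphic_on_imp_continuous_on unfolding fock2_def by auto

lemma fock_norm_nonneg: "0 \<le> fock_norm f"
  by (simp add: fock_norm_def)

lemma power2_fock_norm: "(fock_norm f)\<^sup>2 = integral\<^sup>L lborel (fock_weight f) / pi"
  by (simp add: fock_norm_def)

lemma fock2_dominated:
  assumes hol: "f holomorphic_on UNIV" and w: "integrable lborel w"
    and le: "\<And>z. fock_weight f z \<le> w z"
  shows "f \<in> fock2" and "fock_norm f \<le> sqrt (integral\<^sup>L lborel w / pi)"
proof -
  have [measurable]: "fock_weight f \<in> borel_measurable borel"
    by (intro borel_measurable_fock_weight holomorphic_on_imp_continuous_on hol)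
  have int: "integrable lborel (fock_weight f)"
    by (rule Bochner_Integration.integrable_bound[OF w]) (auto intro: order_trans[OF le abs_ge_self])
  then show "f \<in> fock2"
    using hol by (simp add: fock2_def)
  have "integral\<^sup>L lborel (fock_weight f) \<le> integral\<^sup>L lborel w"
    by (rule integral_mono[OF int w le])
  then show "fock_norm f \<le> sqrt (integral\<^sup>L lborel w / pi)"
    by (simp add: fock_norm_def divide_right_mono)
qed

lemma fock2_diff:
  assumes f: "f \<in> fock2" and g: "g \<in> fock2"
  shows "(\<lambda>z. f z - g z) \<in> fock2"
    and "fock_norm (\<lambda>z. f z - g z) \<le> sqrt 2 * (fock_norm f + fock_norm g)"
proof -
  let ?w = "\<lambda>z. 2 * fock_weight f z + 2 * fock_weight g z"
  have hol: "(\<lambda>z. f z - g z) holomorphic_on UNIV"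
    using fock2D(1)[OF f] fock2D(1)[OF g] by (intro holomorphic_intros)
  have w: "integrable lborel ?w"
    using fock2D(3)[OF f] fock2D(3)[OF g] by simp
  have le: "fock_weight (\<lambda>z. f z - g z) z \<le> ?w z" for z
  proof -
    have "(cmod (f z - g z))\<^sup>2 \<le> (cmod (f z) + cmod (g z))\<^sup>2"
      by (intro power_mono norm_triangle_ineq4) simp
    also have "\<dots> \<le> 2 * (cmod (f z))\<^sup>2 + 2 * (cmod (g z))\<^sup>2"
      using zero_le_power2[of "cmod (f z) - cmod (g z)"] unfolding power2_sum power2_diff
      by linarith
    finally have "(cmod (f z - g z))\<^sup>2 * exp (- (cmod z)\<^sup>2) \<le>
        (2 * (cmod (f z))\<^sup>2 + 2 * (cmod (g z))\<^sup>2) * exp (- (cmod z)\<^sup>2)"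
      by (rule mult_right_mono) simp
    then show ?thesis
      by (simp add: fock_weight_def algebra_simps)
  qed
  show "(\<lambda>z. f z - g z) \<in> fock2"
    by (rule fock2_dominated(1)[OF hol w le])
  have "integral\<^sup>L lborel ?w / pi = 2 * (fock_norm f)\<^sup>2 + 2 * (fock_norm g)\<^sup>2"
    using fock2D(3)[OF f] fock2D(3)[OF g] by (simp add: power2_fock_norm add_divide_distrib)
  also have "\<dots> \<le> (sqrt 2 * (fock_norm f + fock_norm g))\<^sup>2"
    using fock_norm_nonneg[of f] fock_norm_nonneg[of g]
    by (simp add: power_mult_distrib power2_sum)
  finally have "sqrt (integral\<^sup>L lborel ?w / pi) \<le> sqrt 2 * (fock_norm f + fock_norm g)"
    by (rule real_le_lsqrt[rotated]) (simp add: fock_norm_nonneg)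
  then show "fock_norm (\<lambda>z. f z - g z) \<le> sqrt 2 * (fock_norm f + fock_norm g)"
    using fock2_dominated(2)[OF hol w le] by linarith
qed

lemma fock2_scale:
  assumes f: "f \<in> fock2"
  shows "(\<lambda>z. c * f z) \<in> fock2" and "fock_norm (\<lambda>z. c * f z) = cmod c * fock_norm f"
proof -
  have hol: "(\<lambda>z. c * f z) holomorphic_on UNIV"
    using fock2D(1)[OF f] by (intro holomorphic_intros)
  have weight: "fock_weight (\<lambda>z. c * f z) = (\<lambda>z. (cmod c)\<^sup>2 * fock_weight f z)"
    by (auto simp: fock_weight_def norm_mult power_mult_distrib)
  show "(\<lambda>z. c * f z) \<in> fock2"
    using hol fock2D(3)[OF f] by (simp add: fock2_def weight)
  have "(fock_norm (\<lambda>z. c * f z))\<^sup>2 = (cmod c * fock_norm f)\<^sup>2"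
    by (simp add: power2_fock_norm weight power_mult_distrib)
  then show "fock_norm (\<lambda>z. c * f z) = cmod c * fock_norm f"
    using fock_norm_nonneg by (simp add: power2_eq_iff_nonneg)
qed

lemma integrable_gaussian_weight: "integrable lborel (\<lambda>t::real. (1 + t\<^sup>2) * exp (- (t\<^sup>2) / 2))"
proof -
  have "integrable lborel (\<lambda>t. sqrt (2 * pi) * (std_normal_density t + std_normal_density t * t\<^sup>2))"
    using integrable_std_normal_moment[of 2] by auto
  moreover have "(\<lambda>t. sqrt (2 * pi) * (std_normal_density t + std_normal_density t * t\<^sup>2)) =
      (\<lambda>t::real. (1 + t\<^sup>2) * exp (- (t\<^sup>2) / 2))"
    by (auto simp: std_normal_density_def field_simps)
  ultimately show ?thesis by simp
qed

lemma fock2_id: "(\<lambda>z. z) \<in> fock2"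
proof -
  define p where "p = (\<lambda>t::real. (1 + t\<^sup>2) * exp (- (t\<^sup>2) / 2))"
  have p_nonneg: "0 \<le> p t" for t
    by (simp add: p_def)
  have [measurable]: "p \<in> borel_measurable borel"
    unfolding p_def by measurable
  have "(\<integral>\<^sup>+z. ennreal (p (Re z) * p (Im z)) \<partial>lborel) =
      (\<integral>\<^sup>+z. (\<Prod>b\<in>Basis. ennreal (p ((z :: complex) \<bullet> b))) \<partial>lborel)"
    by (simp add: Basis_complex_def ennreal_mult' p_nonneg)
  also have "\<dots> = (\<Prod>b\<in>(Basis :: complex set). \<integral>\<^sup>+t. ennreal (p t) \<partial>lborel)"
    by (rule nn_integral_lborel_prod) auto
  also have "\<dots> < \<infinity>"
    using integrable_gaussian_weight p_nonneg
    by (simp add: p_def nn_integral_eq_integral Basis_complex_def ennreal_mult_less_top)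
  finally have "integrable lborel (\<lambda>z. p (Re z) * p (Im z))"
    by (intro integrableI_nonneg) (auto simp: p_nonneg)
  moreover have "fock_weight (\<lambda>z. z) z \<le> p (Re z) * p (Im z)" for z
  proof -
    have norm_sq: "(cmod z)\<^sup>2 = (Re z)\<^sup>2 + (Im z)\<^sup>2"
      by (simp add: cmod_power2)
    have "exp (- (cmod z)\<^sup>2) \<le> exp (- ((Re z)\<^sup>2) / 2) * exp (- ((Im z)\<^sup>2) / 2)"
      unfolding norm_sq by (simp flip: exp_add add: field_simps)
    moreover have "(Re z)\<^sup>2 + (Im z)\<^sup>2 \<le> (1 + (Re z)\<^sup>2) * (1 + (Im z)\<^sup>2)"
      by (simp add: algebra_simps)
    ultimately have "((Re z)\<^sup>2 + (Im z)\<^sup>2) * exp (- (cmod z)\<^sup>2) \<le>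
        ((1 + (Re z)\<^sup>2) * (1 + (Im z)\<^sup>2)) * (exp (- ((Re z)\<^sup>2) / 2) * exp (- ((Im z)\<^sup>2) / 2))"
      by (intro mult_mono) auto
    then show ?thesis
      unfolding fock_weight_def p_def norm_sq by (simp add: algebra_simps)
  qed
  ultimately show ?thesis
    by (intro fock2_dominated(1)) auto
qed

section \<open>Bounded operators\<close>

lemma bdd_opD:
  assumes "bdd_op A"
  shows "\<And>f. f \<in> fock2 \<Longrightarrow> A f \<in> fock2"
    and "\<And>f g. f \<in> fock2 \<Longrightarrow> g \<in> fock2 \<Longrightarrow> A (\<lambda>z. f z + g z) = (\<lambda>z. A f z + A g z)"
    and "\<And>f c. f \<in> fock2 \<Longrightarrow> A (\<lambda>z. c * f z) = (\<lambda>z. c * A f z)"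
    and "\<exists>C. \<forall>f\<in>fock2. fock_norm (A f) \<le> C * fock_norm f"
  using assms unfolding bdd_op_def by blast+

lemma bdd_op_diff:
  assumes A: "bdd_op A" and B: "bdd_op B"
  shows "bdd_op (\<lambda>f z. A f z - B f z)"
proof -
  obtain CA where CA: "\<And>f. f \<in> fock2 \<Longrightarrow> fock_norm (A f) \<le> CA * fock_norm f"
    using bdd_opD(4)[OF A] by blast
  obtain CB where CB: "\<And>f. f \<in> fock2 \<Longrightarrow> fock_norm (B f) \<le> CB * fock_norm f"
    using bdd_opD(4)[OF B] by blast
  have "fock_norm (\<lambda>z. A f z - B f z) \<le> (sqrt 2 * (CA + CB)) * fock_norm f" if f: "f \<in> fock2" for f
  proof -
    have "fock_norm (\<lambda>z. A f z - B f z) \<le> sqrt 2 * (fock_norm (A f) + fock_norm (B f))"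
      using fock2_diff(2) bdd_opD(1)[OF A f] bdd_opD(1)[OF B f] by blast
    also have "\<dots> \<le> sqrt 2 * (CA * fock_norm f + CB * fock_norm f)"
      using CA[OF f] CB[OF f] by (intro mult_left_mono add_mono) auto
    finally show ?thesis
      by (simp add: algebra_simps)
  qed
  then have bound: "\<exists>C. \<forall>f\<in>fock2. fock_norm (\<lambda>z. A f z - B f z) \<le> C * fock_norm f"
    by blast
  show ?thesis
    using bdd_opD(1-3)[OF A] bdd_opD(1-3)[OF B] fock2_diff(1)
    unfolding bdd_op_def by (intro conjI bound) (auto simp: algebra_simps)
qed

lemma bdd_op_scale:
  assumes A: "bdd_op A"
  shows "bdd_op (\<lambda>f z. c * A f z)"
proof -
  obtain C where C: "\<And>f. f \<in> fock2 \<Longrightarrow> fock_norm (A f) \<le> C * fock_norm f"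
    using bdd_opD(4)[OF A] by blast
  have "fock_norm (\<lambda>z. c * A f z) \<le> (cmod c * C) * fock_norm f" if "f \<in> fock2" for f
    using C[OF that] fock2_scale(2)[OF bdd_opD(1)[OF A that]]
    by (simp add: mult.assoc mult_left_mono)
  then have bound: "\<exists>C. \<forall>f\<in>fock2. fock_norm (\<lambda>z. c * A f z) \<le> C * fock_norm f"
    by blast
  show ?thesis
    using bdd_opD(1-3)[OF A] fock2_scale(1)
    unfolding bdd_op_def by (intro conjI bound) (auto simp: algebra_simps)
qed

lemma fock_norm_le_op_norm:
  assumes A: "bdd_op A" and f: "f \<in> fock2"
  shows "fock_norm (A f) \<le> op_norm A * fock_norm f"
proof -
  obtain C where C: "\<And>f. f \<in> fock2 \<Longrightarrow> fock_norm (A f) \<le> C * fock_norm f"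
    using bdd_opD(4)[OF A] by blast
  have bdd: "bdd_above ((\<lambda>f. fock_norm (A f)) ` {f \<in> fock2. fock_norm f \<le> 1})"
  proof (rule bdd_aboveI2)
    fix g assume g: "g \<in> {f \<in> fock2. fock_norm f \<le> 1}"
    have "C * fock_norm g \<le> max C 0"
      using g fock_norm_nonneg[of g]
      by (cases "0 \<le> C") (simp_all add: mult_left_le mult_nonpos_nonneg max_def)
    then show "fock_norm (A g) \<le> max C 0"
      using C[of g] g by simp
  qed
  show ?thesis
  proof (cases "fock_norm f = 0")
    case True
    then show ?thesis
      using C[OF f] fock_norm_nonneg[of "A f"] by simp
  next
    case False
    then have pos: "0 < fock_norm f"
      using fock_norm_nonneg[of f] by simp
    define u where "u = (\<lambda>z. complex_of_real (1 / fock_norm f) * f z)"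
    have u: "u \<in> fock2" "fock_norm u = 1"
      using fock2_scale[OF f, of "complex_of_real (1 / fock_norm f)"] pos unfolding u_def
      by (auto simp: norm_divide)
    have "fock_norm (A u) = fock_norm (A f) / fock_norm f"
      unfolding u_def bdd_opD(3)[OF A f]
      using fock2_scale(2)[OF bdd_opD(1)[OF A f], of "complex_of_real (1 / fock_norm f)"] pos
      by (simp add: norm_divide)
    moreover have "fock_norm (A u) \<le> op_norm A"
      unfolding op_norm_def by (rule cSup_upper[OF _ bdd]) (use u in auto)
    ultimately have "fock_norm (A f) / fock_norm f \<le> op_norm A"
      by simp
    then show ?thesis
      using pos by (simp add: divide_le_eq mult.commute)
  qed
qed

section \<open>Bounded point evaluation\<close>

definition unit_circle_mean_sq :: "(complex \<Rightarrow> complex) \<Rightarrow> complex \<Rightarrow> ennreal" where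
  "unit_circle_mean_sq g c =
     (\<integral>\<^sup>+t. ennreal ((cmod (g (c + cis (2 * pi * t))))\<^sup>2) * indicator {0..1} t \<partial>lborel)"

lemma norm_le_circle_integral:
  assumes hol: "g holomorphic_on UNIV" and cz: "cmod (c - z) \<le> 1/2"
  shows "cmod (g z) \<le> 2 * integral {0..1} (\<lambda>t. cmod (g (c + cis (2 * pi * t))))"
proof -
  let ?e = "\<lambda>t. cis (2 * pi * t)"
  have circ: "circlepath c 1 t = c + ?e t" for t
    by (simp add: circlepath cis_conv_exp mult_ac)
  have cont: "continuous_on UNIV g"
    using hol holomorphic_on_imp_continuous_on by blast
  have "((\<lambda>u. g u / (u - z)) has_contour_integral (2 * of_real pi * \<i> * g z)) (circlepath c 1)"
    by (rule Cauchy_integral_circlepath)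
       (use cont hol cz in \<open>auto intro: continuous_on_subset holomorphic_on_subset simp: norm_minus_commute\<close>)
  then have int: "((\<lambda>t. g (circlepath c 1 t) / (circlepath c 1 t - z) *
      vector_derivative (circlepath c 1) (at t within {0..1})) has_integral (2 * of_real pi * \<i> * g z)) {0..1}"
    unfolding has_contour_integral_def .
  have bound: "cmod (g (circlepath c 1 t) / (circlepath c 1 t - z) *
      vector_derivative (circlepath c 1) (at t within {0..1})) \<le> 4 * pi * cmod (g (c + ?e t))"
    if t: "t \<in> {0..1}" for t
  proof -
    have far: "1/2 \<le> cmod (c + ?e t - z)"
      using norm_diff_ineq[of "?e t" "c - z"] cz by (simp add: algebra_simps)
    have "cmod (vector_derivative (circlepath c 1) (at t within {0..1})) = 2 * pi"
      using t by (simp add: vector_derivative_circlepath01 norm_mult norm_exp)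
    then have "cmod (g (circlepath c 1 t) / (circlepath c 1 t - z) *
        vector_derivative (circlepath c 1) (at t within {0..1})) =
        cmod (g (c + ?e t)) / cmod (c + ?e t - z) * (2 * pi)"
      by (simp add: circ norm_mult norm_divide)
    also have "\<dots> \<le> cmod (g (c + ?e t)) / (1/2) * (2 * pi)"
      using far by (intro mult_right_mono divide_left_mono) auto
    also have "\<dots> = 4 * pi * cmod (g (c + ?e t))"
      by simp
    finally show ?thesis .
  qed
  have "continuous_on {0..1} (\<lambda>t. cmod (g (c + ?e t)))"
    by (intro continuous_intros continuous_on_compose2[OF cont]) auto
  then have "cmod (integral {0..1} (\<lambda>t. g (circlepath c 1 t) / (circlepath c 1 t - z) *
      vector_derivative (circlepath c 1) (at t within {0..1})))
      \<le> integral {0..1} (\<lambda>t. 4 * pi * cmod (g (c + ?e t)))"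
    using int bound
    by (intro integral_norm_bound_integral)
       (auto intro: integrable_continuous_interval continuous_intros simp: has_integral_integrable)
  then have "cmod (2 * of_real pi * \<i> * g z) \<le> integral {0..1} (\<lambda>t. 4 * pi * cmod (g (c + ?e t)))"
    by (simp only: integral_unique[OF int])
  then show ?thesis
    by (simp add: norm_mult)
qed

lemma borel_measurable_circle_shift:
  fixes f :: "complex \<Rightarrow> real"
  assumes "continuous_on UNIV f"
  shows "(\<lambda>(c, t). ennreal (f (c + cis (2 * pi * t))) * indicator {0..1} t)
    \<in> borel_measurable (lborel \<Otimes>\<^sub>M lborel)"
proof -
  have "continuous_on UNIV (\<lambda>p :: complex \<times> real. f (fst p + cis (2 * pi * snd p)))"
    by (intro continuous_on_compose2[OF assms] continuous_intros) auto
  then have "(\<lambda>p :: complex \<times> real. f (fst p + cis (2 * pi * snd p))) \<in> borel_measurable borel"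
    by (rule borel_measurable_continuous_onI)
  then have [measurable]: "(\<lambda>p :: complex \<times> real. f (fst p + cis (2 * pi * snd p)))
      \<in> borel_measurable (lborel \<Otimes>\<^sub>M lborel)"
    by (simp add: lborel_prod measurable_lborel1)
  show ?thesis
    by measurable
qed

lemma borel_measurable_unit_circle_mean_sq:
  assumes "continuous_on UNIV g"
  shows "unit_circle_mean_sq g \<in> borel_measurable borel"
proof -
  have "(\<lambda>c. unit_circle_mean_sq g c) \<in> borel_measurable lborel"
    unfolding unit_circle_mean_sq_def
    by (rule lborel.borel_measurable_nn_integral)
       (rule borel_measurable_circle_shift, use assms in \<open>intro continuous_intros\<close>)
  then show ?thesis
    by (simp add: measurable_lborel1)
qed

lemma power2_nn_integral_unit_interval_le:
  fixes f :: "real \<Rightarrow> ennreal"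
  assumes [measurable]: "f \<in> borel_measurable borel"
  shows "(\<integral>\<^sup>+t. f t * indicator {0..1} t \<partial>lborel)\<^sup>2 \<le> (\<integral>\<^sup>+t. (f t)\<^sup>2 * indicator {0..1} t \<partial>lborel)"
proof -
  have ind: "(indicator {0..1::real} t :: ennreal) * indicator {0..1} t = indicator {0..1} t"
    and ind_sq: "(indicator {0..1::real} t :: ennreal)\<^sup>2 = indicator {0..1} t" for t
    by (simp_all split: split_indicator)
  have "(\<integral>\<^sup>+t. f t * indicator {0..1} t * indicator {0..1} t \<partial>lborel)\<^sup>2 \<le>
      (\<integral>\<^sup>+t. (f t * indicator {0..1} t)\<^sup>2 \<partial>lborel) * (\<integral>\<^sup>+t. (indicator {0..1::real} t)\<^sup>2 \<partial>lborel)"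
    by (rule Cauchy_Schwarz_nn_integral) measurable
  then show ?thesis
    by (simp add: mult.assoc power_mult_distrib ind ind_sq)
qed

lemma power2_norm_le_unit_circle_mean_sq:
  assumes hol: "g holomorphic_on UNIV" and cz: "cmod (c - z) \<le> 1/2"
  shows "ennreal ((cmod (g z))\<^sup>2) \<le> 4 * unit_circle_mean_sq g c"
proof -
  define h where "h = (\<lambda>t. cmod (g (c + cis (2 * pi * t))))"
  define X where "X = (\<integral>\<^sup>+t. ennreal (h t) * indicator {0..1} t \<partial>lborel)"
  have cont: "continuous_on UNIV g"
    using hol holomorphic_on_imp_continuous_on by blast
  have "continuous_on UNIV h"
    unfolding h_def by (intro continuous_on_compose2[OF cont] continuous_intros) auto
  then have [measurable]: "h \<in> borel_measurable borel"
    by (rule borel_measurable_continuous_onI)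
  have "(h has_integral integral {0..1} h) {0..1}"
    using \<open>continuous_on UNIV h\<close>
    by (intro integrable_integral integrable_continuous_interval) (rule continuous_on_subset, auto)
  then have "X = ennreal (integral {0..1} h)"
    unfolding X_def by (intro nn_integral_has_integral_lebesgue') (auto simp: h_def)
  moreover have "ennreal (cmod (g z)) \<le> ennreal (2 * integral {0..1} h)"
    using norm_le_circle_integral[OF hol cz] unfolding h_def[symmetric] by (rule ennreal_leI)
  ultimately have "ennreal (cmod (g z)) \<le> 2 * X"
    by (simp add: ennreal_mult')
  then have "(ennreal (cmod (g z)))\<^sup>2 \<le> (2 * X)\<^sup>2"
    by (rule power_mono) simp
  then have sq: "ennreal ((cmod (g z))\<^sup>2) \<le> 4 * X\<^sup>2"
    by (simp add: ennreal_power power_mult_distrib)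
  have "(\<lambda>t. ennreal (h t)) \<in> borel_measurable borel"
    by measurable
  from power2_nn_integral_unit_interval_le[OF this] have cs: "X\<^sup>2 \<le> unit_circle_mean_sq g c"
    unfolding X_def unit_circle_mean_sq_def by (simp add: h_def ennreal_power)
  from sq cs show ?thesis
    by (meson order_trans mult_left_mono zero_le)
qed

lemma power2_norm_le_exp_fock_weight:
  assumes "cmod w \<le> R"
  shows "(cmod (g w))\<^sup>2 \<le> exp (R\<^sup>2) * fock_weight g w"
proof -
  have "(cmod w)\<^sup>2 \<le> R\<^sup>2"
    using assms by (simp add: power_mono)
  then have "1 \<le> exp (R\<^sup>2) * exp (- (cmod w)\<^sup>2)"
    by (simp flip: exp_add)
  then have "(cmod (g w))\<^sup>2 * 1 \<le> (cmod (g w))\<^sup>2 * (exp (R\<^sup>2) * exp (- (cmod w)\<^sup>2))"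
    by (rule mult_left_mono) simp
  then show ?thesis
    by (simp add: fock_weight_def algebra_simps)
qed

lemma nn_integral_translate:
  fixes f :: "'a::euclidean_space \<Rightarrow> ennreal"
  assumes [measurable]: "f \<in> borel_measurable borel"
  shows "(\<integral>\<^sup>+x. f (a + x) \<partial>lborel) = (\<integral>\<^sup>+x. f x \<partial>lborel)"
proof -
  have "(\<integral>\<^sup>+x. f x \<partial>lborel) = (\<integral>\<^sup>+x. f x \<partial>distr lborel borel ((+) a))"
    by (simp add: lborel_distr_plus)
  also have "\<dots> = (\<integral>\<^sup>+x. f (a + x) \<partial>lborel)"
    by (subst nn_integral_distr) auto
  finally show ?thesis ..
qed

lemma nn_integral_fock_weight_translate:
  assumes g: "g \<in> fock2"
  shows "(\<integral>\<^sup>+x. ennreal (fock_weight g (a + x)) \<partial>lborel) = ennreal (integral\<^sup>L lborel (fock_weight g))"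
proof -
  have [measurable]: "fock_weight g \<in> borel_measurable borel"
    by (rule borel_measurable_fock_weight[OF fock2D(2)[OF g]])
  have "(\<integral>\<^sup>+x. ennreal (fock_weight g (a + x)) \<partial>lborel) = (\<integral>\<^sup>+x. ennreal (fock_weight g x) \<partial>lborel)"
    by (rule nn_integral_translate) measurable
  also have "\<dots> = ennreal (integral\<^sup>L lborel (fock_weight g))"
    by (rule nn_integral_eq_integral[OF fock2D(3)[OF g]]) simp
  finally show ?thesis .
qed

lemma nn_integral_unit_circle_mean_sq_le:
  assumes g: "g \<in> fock2" and Q: "Q \<in> sets borel" and R: "\<And>c. c \<in> Q \<Longrightarrow> cmod c + 1 \<le> R"
  shows "(\<integral>\<^sup>+c. unit_circle_mean_sq g c * indicator Q c \<partial>lborel)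
    \<le> ennreal (exp (R\<^sup>2) * integral\<^sup>L lborel (fock_weight g))"
proof -
  define F where "F c t = ennreal (exp (R\<^sup>2) * fock_weight g (c + cis (2 * pi * t))) * indicator {0..1::real} t"
    for c t
  have [measurable]: "fock_weight g \<in> borel_measurable borel"
    by (rule borel_measurable_fock_weight[OF fock2D(2)[OF g]])
  have "continuous_on UNIV (\<lambda>w. exp (R\<^sup>2) * fock_weight g w)"
    using fock2D(2)[OF g] unfolding fock_weight_def by (intro continuous_intros)
  then have F_meas: "case_prod F \<in> borel_measurable (lborel \<Otimes>\<^sub>M lborel)"
    unfolding F_def by (rule borel_measurable_circle_shift)
  have "(\<integral>\<^sup>+c. unit_circle_mean_sq g c * indicator Q c \<partial>lborel) \<le> (\<integral>\<^sup>+c. \<integral>\<^sup>+t. F c t \<partial>lborel \<partial>lborel)"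
  proof (rule nn_integral_mono)
    fix c
    show "unit_circle_mean_sq g c * indicator Q c \<le> (\<integral>\<^sup>+t. F c t \<partial>lborel)"
    proof (cases "c \<in> Q")
      case True
      have "ennreal ((cmod (g (c + cis (2 * pi * t))))\<^sup>2) * indicator {0..1} t \<le> F c t" for t
      proof -
        have "cmod (c + cis (2 * pi * t)) \<le> R"
          using R[OF True] norm_triangle_ineq[of c "cis (2 * pi * t)"] by simp
        then show ?thesis
          unfolding F_def by (intro mult_right_mono ennreal_leI power2_norm_le_exp_fock_weight) auto
      qed
      then show ?thesis
        using True unfolding unit_circle_mean_sq_def by (simp add: nn_integral_mono)
    qed simp
  qed
  also have "\<dots> = (\<integral>\<^sup>+t. \<integral>\<^sup>+c. F c t \<partial>lborel \<partial>lborel)"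
    by (rule lborel_pair.Fubini'[OF F_meas, symmetric])
  also have "\<dots> = (\<integral>\<^sup>+t. ennreal (exp (R\<^sup>2) * integral\<^sup>L lborel (fock_weight g)) * indicator {0..1::real} t \<partial>lborel)"
  proof (rule nn_integral_cong)
    fix t :: real
    have "(\<integral>\<^sup>+c. F c t \<partial>lborel) = ennreal (exp (R\<^sup>2)) *
        (\<integral>\<^sup>+c. ennreal (fock_weight g (cis (2 * pi * t) + c)) \<partial>lborel) * indicator {0..1} t"
      unfolding F_def by (simp add: ennreal_mult nn_integral_multc nn_integral_cmult add.commute)
    then show "(\<integral>\<^sup>+c. F c t \<partial>lborel) =
        ennreal (exp (R\<^sup>2) * integral\<^sup>L lborel (fock_weight g)) * indicator {0..1} t"
      by (simp add: nn_integral_fock_weight_translate[OF g] ennreal_mult)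
  qed
  also have "\<dots> = ennreal (exp (R\<^sup>2) * integral\<^sup>L lborel (fock_weight g))"
    by (simp add: nn_integral_cmult_indicator)
  finally show ?thesis .
qed

lemma power2_norm_le_fock_integral:
  assumes g: "g \<in> fock2"
  shows "(cmod (g z))\<^sup>2 \<le> 16 * exp ((cmod z + 2)\<^sup>2) * integral\<^sup>L lborel (fock_weight g)"
proof -
  define R where "R = cmod z + 2"
  define I where "I = integral\<^sup>L lborel (fock_weight g)"
  define Q where "Q = cbox (z - (1 + \<i>) / 4) (z + (1 + \<i>) / 4)"
  have Q_sets [measurable]: "Q \<in> sets borel"
    by (simp add: Q_def)
  have Q_measure: "emeasure lborel Q = ennreal (1 / 4)"
    unfolding Q_def by (subst emeasure_lborel_cbox) (auto simp: Basis_complex_def)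
  have near: "cmod (c - z) \<le> 1/2" if "c \<in> Q" for c
  proof -
    have "Re z - 1/4 \<le> Re c" "Re c \<le> Re z + 1/4" "Im z - 1/4 \<le> Im c" "Im c \<le> Im z + 1/4"
      using that by (auto simp: Q_def in_cbox_complex_iff)
    then have "\<bar>Re (c - z)\<bar> \<le> 1/4" "\<bar>Im (c - z)\<bar> \<le> 1/4"
      unfolding minus_complex.sel by (intro abs_leI; linarith)+
    then show ?thesis
      using cmod_le[of "c - z"] by linarith
  qed
  have R: "cmod c + 1 \<le> R" if "c \<in> Q" for c
    using near[OF that] norm_triangle_ineq2[of c z] unfolding R_def by linarith
  have [measurable]: "unit_circle_mean_sq g \<in> borel_measurable borel"
    by (rule borel_measurable_unit_circle_mean_sq[OF fock2D(2)[OF g]])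
  have "ennreal ((cmod (g z))\<^sup>2 / 4) = (\<integral>\<^sup>+c. ennreal ((cmod (g z))\<^sup>2) * indicator Q c \<partial>lborel)"
    by (simp add: nn_integral_cmult_indicator Q_measure flip: ennreal_mult')
  also have "\<dots> \<le> (\<integral>\<^sup>+c. 4 * (unit_circle_mean_sq g c * indicator Q c) \<partial>lborel)"
    using power2_norm_le_unit_circle_mean_sq[OF fock2D(1)[OF g] near]
    by (intro nn_integral_mono) (simp split: split_indicator)
  also have "\<dots> = 4 * (\<integral>\<^sup>+c. unit_circle_mean_sq g c * indicator Q c \<partial>lborel)"
    by (rule nn_integral_cmult) measurable
  also have "\<dots> \<le> 4 * ennreal (exp (R\<^sup>2) * I)"
    unfolding I_def by (intro mult_left_mono nn_integral_unit_circle_mean_sq_le[OF g Q_sets] R zero_le)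
  finally have "ennreal ((cmod (g z))\<^sup>2 / 4) \<le> ennreal (4 * (exp (R\<^sup>2) * I))"
    by (simp add: ennreal_mult')
  then show ?thesis
    by (subst (asm) ennreal_le_iff) (auto simp: I_def R_def)
qed

lemma norm_le_fock_norm:
  assumes g: "g \<in> fock2"
  shows "cmod (g z) \<le> 4 * sqrt (pi * exp ((cmod z + 2)\<^sup>2)) * fock_norm g"
proof -
  have "(cmod (g z))\<^sup>2 \<le> 16 * exp ((cmod z + 2)\<^sup>2) * (pi * (fock_norm g)\<^sup>2)"
    using power2_norm_le_fock_integral[OF g, of z] power2_fock_norm[of g] by simp
  also have "\<dots> = (4 * sqrt (pi * exp ((cmod z + 2)\<^sup>2)) * fock_norm g)\<^sup>2"
    by (simp add: power_mult_distrib)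
  finally show ?thesis
    by (rule power2_le_imp_le) (simp add: fock_norm_nonneg)
qed

section \<open>Holomorphy on the sector\<close>

lemma holomorphic_on_eval_op_analytic:
  assumes an: "op_analytic_on T A" and A: "open A"
    and bdd: "\<And>\<xi>. \<xi> \<in> A \<Longrightarrow> bdd_op (T \<xi>)" and g: "g \<in> fock2"
  shows "(\<lambda>\<zeta>. T \<zeta> g z) holomorphic_on A"
  unfolding holomorphic_on_open[OF A]
proof
  fix \<xi> assume \<xi>: "\<xi> \<in> A"
  obtain D where D: "bdd_op D"
    and lim: "((\<lambda>h. op_norm (\<lambda>f z. T (\<xi> + h) f z - T \<xi> f z - h * D f z) / cmod h) \<longlongrightarrow> 0) (at 0)"
    using an \<xi> unfolding op_analytic_on_def by blast
  define B where "B h = (\<lambda>f z. T (\<xi> + h) f z - T \<xi> f z - h * D f z)" for h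
  define K where "K = 4 * sqrt (pi * exp ((cmod z + 2)\<^sup>2)) * fock_norm g"
  obtain e where e: "0 < e" "ball \<xi> e \<subseteq> A"
    using A \<xi> open_contains_ball by blast
  have "\<forall>\<^sub>F h in at 0. \<xi> + h \<in> A \<and> h \<noteq> 0"
    unfolding eventually_at using e by (intro exI[of _ e]) (auto simp: dist_norm subset_iff)
  then have "\<forall>\<^sub>F h in at 0. cmod ((T (\<xi> + h) g z - T \<xi> g z) / h - D g z) \<le> K * (op_norm (B h) / cmod h)"
  proof (rule eventually_mono)
    fix h assume h: "\<xi> + h \<in> A \<and> h \<noteq> 0"
    have Bh: "bdd_op (B h)"
      unfolding B_def using h bdd \<xi> by (intro bdd_op_diff bdd_op_scale D) auto
    have "cmod (B h g z) \<le> 4 * sqrt (pi * exp ((cmod z + 2)\<^sup>2)) * fock_norm (B h g)"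
      by (rule norm_le_fock_norm[OF bdd_opD(1)[OF Bh g]])
    also have "\<dots> \<le> 4 * sqrt (pi * exp ((cmod z + 2)\<^sup>2)) * (op_norm (B h) * fock_norm g)"
      by (intro mult_left_mono fock_norm_le_op_norm[OF Bh g]) simp
    finally have "cmod (B h g z) \<le> K * op_norm (B h)"
      by (simp add: K_def mult_ac)
    moreover have "(T (\<xi> + h) g z - T \<xi> g z) / h - D g z = B h g z / h"
      using h by (simp add: B_def field_simps)
    ultimately show "cmod ((T (\<xi> + h) g z - T \<xi> g z) / h - D g z) \<le> K * (op_norm (B h) / cmod h)"
      by (simp add: norm_divide divide_right_mono)
  qed
  moreover have "((\<lambda>h. K * (op_norm (B h) / cmod h)) \<longlongrightarrow> 0) (at 0)"
    using tendsto_mult_right_zero[OF lim] unfolding B_def .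
  ultimately have "((\<lambda>h. (T (\<xi> + h) g z - T \<xi> g z) / h - D g z) \<longlongrightarrow> 0) (at 0)"
    by (rule Lim_null_comparison)
  then have "((\<lambda>h. (T (\<xi> + h) g z - T \<xi> g z) / h) \<longlongrightarrow> D g z) (at 0)"
    by (rule LIM_zero_cancel)
  then show "\<exists>d. ((\<lambda>\<zeta>. T \<zeta> g z) has_field_derivative d) (at \<xi>)"
    unfolding DERIV_def by blast
qed

lemma of_real_in_sector: "0 < \<theta> \<Longrightarrow> 0 < t \<Longrightarrow> complex_of_real t \<in> sector \<theta>"
  by (simp add: sector_def)

lemma open_sector: "open (sector \<theta>)"
proof (cases "\<theta> \<le> pi")
  case True
  then have "sector \<theta> = (- \<real>\<^sub>\<le>\<^sub>0) \<inter> Arg -` {-\<theta><..<\<theta>}"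
    by (auto simp: sector_def abs_less_iff nonpos_Reals_def)
  then show ?thesis
    using continuous_on_Arg by (simp add: continuous_open_preimage open_Compl)
next
  case False
  have "\<bar>Arg z\<bar> < \<theta>" for z
    using False mpi_less_Arg[of z] Arg_le_pi[of z] unfolding abs_less_iff by linarith
  then have "sector \<theta> = - {0}"
    by (auto simp: sector_def)
  then show ?thesis
    by (simp add: open_Compl)
qed

lemma connected_sector: "connected (sector \<theta>)"
proof -
  let ?P = "{0<..} \<times> {-\<theta><..<\<theta>}"
  have "sector \<theta> = (\<lambda>p. rcis (fst p) (snd p)) ` ?P"
  proof (intro equalityI subsetI)
    fix z assume "z \<in> sector \<theta>"
    then have "(cmod z, Arg z) \<in> ?P" "z = rcis (cmod z) (Arg z)"
      by (auto simp: sector_def abs_less_iff rcis_cmod_Arg)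
    then show "z \<in> (\<lambda>p. rcis (fst p) (snd p)) ` ?P"
      by force
  next
    fix z assume "z \<in> (\<lambda>p. rcis (fst p) (snd p)) ` ?P"
    then obtain r a where "0 < r" "- \<theta> < a" "a < \<theta>" and z: "z = rcis r a"
      by auto
    then have ra: "0 < r" "\<bar>a\<bar> < \<theta>"
      by auto
    have "\<bar>Arg z\<bar> < \<theta>"
    proof (cases "- pi < a \<and> a \<le> pi")
      case True
      then have "Arg z = a"
        using z ra by (intro Arg_unique') auto
      then show ?thesis
        using ra by simp
    next
      case False
      then show ?thesis
        using ra mpi_less_Arg[of z] Arg_le_pi[of z] by (auto simp: abs_less_iff)
    qed
    moreover have "z \<noteq> 0"
      using z ra by simp
    ultimately show "z \<in> sector \<theta>"
      by (simp add: sector_def)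
  qed
  moreover have "connected ((\<lambda>p. rcis (fst p) (snd p)) ` ?P)"
    by (intro connected_continuous_image continuous_intros convex_connected convex_Times) auto
  ultimately show ?thesis
    by simp
qed

lemma analytic_continuation_sector:
  assumes G: "G holomorphic_on sector \<theta>" and \<theta>: "0 < \<theta>"
    and zero: "\<And>t. 0 < t \<Longrightarrow> G (complex_of_real t) = 0" and \<xi>: "\<xi> \<in> sector \<theta>"
  shows "G \<xi> = 0"
proof (rule analytic_continuation[OF G open_sector connected_sector _ _ _ _ \<xi>])
  show "complex_of_real ` {0<..} \<subseteq> sector \<theta>"
    using \<theta> by (auto simp: of_real_in_sector)
  show "1 \<in> sector \<theta>"
    using of_real_in_sector[OF \<theta>, of 1] by simp
  show "1 islimpt complex_of_real ` {0<..}"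
    unfolding islimpt_approachable
  proof (intro allI impI)
    fix e :: real assume "0 < e"
    then show "\<exists>x\<in>complex_of_real ` {0<..}. x \<noteq> 1 \<and> dist x 1 < e"
      by (intro bexI[of _ "complex_of_real (1 + e / 2)"] imageI) (auto simp: dist_norm)
  qed
  show "\<And>w. w \<in> complex_of_real ` {0<..} \<Longrightarrow> G w = 0"
    using zero by auto
qed

lemma is_comp_op_symbol:
  assumes "is_comp_op A" and "f \<in> fock2"
  shows "A f = f \<circ> A (\<lambda>z. z)"
proof -
  obtain \<phi> where "\<forall>f\<in>fock2. A f = f \<circ> \<phi>"
    using assms(1) unfolding is_comp_op_def by blast
  then show ?thesis
    using assms(2) fock2_id by (simp add: o_def)
qed

theorem lemma2p9:
  fixes S :: "real \<Rightarrow> op" and T :: "complex \<Rightarrow> op" and \<theta> :: real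
  assumes "comp_semigroup S"
    and "0 < \<theta>" and "\<theta> < pi / 2"
    and "analytic_extension S \<theta> T"
  shows "\<forall>\<xi>\<in>sector \<theta>. is_comp_op (T \<xi>)"
proof
  fix \<xi> assume \<xi>: "\<xi> \<in> sector \<theta>"
  have bdd: "\<And>\<zeta>. \<zeta> \<in> sector \<theta> \<Longrightarrow> bdd_op (T \<zeta>)"
    and an: "op_analytic_on T (sector \<theta>)"
    and real: "\<And>t f. 0 < t \<Longrightarrow> f \<in> fock2 \<Longrightarrow> T (complex_of_real t) f = S t f"
    using assms(4) unfolding analytic_extension_def by auto
  have comp: "\<And>t. 0 \<le> t \<Longrightarrow> is_comp_op (S t)"
    using assms(1) unfolding comp_semigroup_def by auto
  have hol: "(\<lambda>\<zeta>. T \<zeta> g z) holomorphic_on sector \<theta>" if "g \<in> fock2" for g z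
    by (rule holomorphic_on_eval_op_analytic[OF an open_sector bdd that])
  have "T \<xi> f = f \<circ> T \<xi> (\<lambda>z. z)" if f: "f \<in> fock2" for f
  proof
    fix z
    have "(\<lambda>\<zeta>. f (T \<zeta> (\<lambda>z. z) z)) holomorphic_on sector \<theta>"
      using holomorphic_on_compose[OF hol[OF fock2_id] holomorphic_on_subset[OF fock2D(1)[OF f]]]
      by (simp add: o_def)
    then have "(\<lambda>\<zeta>. T \<zeta> f z - f (T \<zeta> (\<lambda>z. z) z)) holomorphic_on sector \<theta>"
      by (intro holomorphic_on_diff hol f)
    moreover have "T (complex_of_real t) f z - f (T (complex_of_real t) (\<lambda>z. z) z) = 0" if "0 < t" for t
      using is_comp_op_symbol[OF comp f] that real f fock2_id by simp
    ultimately have "T \<xi> f z - f (T \<xi> (\<lambda>z. z) z) = 0"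
      by (rule analytic_continuation_sector[OF _ assms(2) _ \<xi>])
    then show "T \<xi> f z = (f \<circ> T \<xi> (\<lambda>z. z)) z"
      by simp
  qed
  moreover have "T \<xi> (\<lambda>z. z) holomorphic_on UNIV"
    by (rule fock2D(1)[OF bdd_opD(1)[OF bdd[OF \<xi>] fock2_id]])
  ultimately show "is_comp_op (T \<xi>)"
    unfolding is_comp_op_def by blast
qed

end
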